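(* Let $(\star)$ be a linear system over $\mathbb{F}_q$ ($q$ a prime power) with coefficient matrix $A\in\mathbb{F}_q^{m\times k}$, let $t$ be a positive integer, let $\{(x^{(i)}_1,\dots,x^{(i)}_k)\}_{i=1}^L$ be a list of pairwise disjoint solutions of $(\star)$ in $(\mathbb{F}_q^n)^k$, and let $j_1\ne j_2$ be indices in the same column equivalence class. If $L\ge4t(\Gamma_q)^n$, then there exist $i\in[L]$ and $t$ distinct pairs $(i'_s,i''_s)\in([L]\setminus\{i\})^2$, $s\in[t]$, such that for every $s\in[t]$ the tuple $(y^{(s)}_1,\dots,y^{(s)}_k)$ given by $y^{(s)}_j=x^{(i)}_j$ for $j\ne j_1,j_2$, $y^{(s)}_{j_1}=x^{(i'_s)}_{j_1}$, $y^{(s)}_{j_2}=x^{(i''_s)}_{j_2}$ is a solution of $(\star)$.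
   Context: Solutions are tuples in $(\mathbb{F}_q^n)^k$ with $\sum_ja_{ij}x_j=0$ for all $i$. Two solutions $(x_j)$, $(y_j)$ are disjoint if $\{x_1,\dots,x_k\}\cap\{y_1,\dots,y_k\}=\varnothing$. Indices $j,j'$ are in the same column equivalence class if columns $j,j'$ of $A$ are nonzero scalar multiples of one another. $\Gamma_q:=q\,J(q)$ where $J(t)=\frac1t\min_{0<x<1}\frac{1+x+\cdots+x^{t-1}}{x^{(t-1)/3}}$. *)

theory Defs
  imports "HOL-Analysis.Analysis"
begin

text \<open>Coefficient matrix A in F_q^{m x k} given as a function A i j, i < m, j < k.
  A k-tuple of points of F_q^n is a function x :: nat => 'a^'n (entries j < k matter).\<close>

definition is_solution :: "(nat \<Rightarrow> nat \<Rightarrow> 'a::field) \<Rightarrow> nat \<Rightarrow> nat \<Rightarrow> (nat \<Rightarrow> 'a^'n) \<Rightarrow> bool" where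
  "is_solution A m k x \<longleftrightarrow> (\<forall>i<m. (\<Sum>j<k. A i j *s x j) = 0)"

definition disjoint_sols :: "nat \<Rightarrow> (nat \<Rightarrow> 'b) \<Rightarrow> (nat \<Rightarrow> 'b) \<Rightarrow> bool" where
  "disjoint_sols k x y \<longleftrightarrow> (x ` {..<k}) \<inter> (y ` {..<k}) = {}"

definition same_col_class :: "(nat \<Rightarrow> nat \<Rightarrow> 'a::field) \<Rightarrow> nat \<Rightarrow> nat \<Rightarrow> nat \<Rightarrow> bool" where
  "same_col_class A m j j' \<longleftrightarrow> (\<exists>c. c \<noteq> 0 \<and> (\<forall>i<m. A i j' = c * A i j))"

definition Jfun :: "nat \<Rightarrow> real" where
  "Jfun t = (1 / real t) *
     (INF x\<in>{0<..<1::real}. (\<Sum>i<t. x ^ i) / x powr ((real t - 1) / 3))"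

definition Gamma_q :: "nat \<Rightarrow> real" where
  "Gamma_q q = real q * Jfun q"

end

theory Submission
  imports Defs
begin

text \<open>Write column \<open>j2\<close> of \<open>A\<close> as \<open>c\<close> times column \<open>j1\<close> and put \<open>a i = X i j1\<close>,
  \<open>b i = c X i j2\<close>. Replacing the entries \<open>j1, j2\<close> of the solution \<open>X i\<close> by those of \<open>X y\<close>
  and \<open>X z\<close> yields a solution as soon as \<open>a y + b z = a i + b i\<close>, and disjointness makes \<open>a\<close>
  and \<open>b\<close> injective, so \<open>(i, i)\<close> is the only trivial such pair. If every \<open>i\<close> had fewer than
  \<open>t\<close> nontrivial pairs, the tensor \<open>[a y + b z = a x + b x]\<close> on \<open>[L]\<^sup>3\<close> would be diagonal
  up to sparse noise. By the Croot-Lev-Pach polynomial method the indicator of \<open>u + v + w = 0\<close>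
  on \<open>\<bbbF>\<^sub>q\<^sup>n\<close> is a sum of slices indexed by monomials of low degree, of which there are at
  most \<open>\<Gamma>\<^sub>q\<^sup>n\<close>; Tao's slice-rank argument, with a Turan-type bound absorbing the noise,
  then gives \<open>L \<le> (4t - 1) \<Gamma>\<^sub>q\<^sup>n\<close>.\<close>

section \<open>Slice rank\<close>

lemma annihilator_dual_family:
  fixes f :: "'e \<Rightarrow> 'b \<Rightarrow> 'f::field"
  assumes "finite S" and "finite E"
  shows "\<exists>P\<subseteq>S. card S \<le> card P + card E \<and>
     (\<forall>p\<in>P. \<exists>w. (\<forall>k\<in>E. (\<Sum>x\<in>S. w x * f k x) = 0) \<and> w p = 1 \<and> (\<forall>p'\<in>P. p' \<noteq> p \<longrightarrow> w p' = 0))"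
  using \<open>finite E\<close>
proof (induction E rule: finite_induct)
  case empty
  show ?case
    by (rule exI[of _ S]) (auto intro!: exI[of _ "\<lambda>x. if x = _ then 1 else 0"])
next
  case (insert e E)
  then obtain P W where PS: "P \<subseteq> S" and cardP: "card S \<le> card P + card E" and
    W: "\<And>p. p \<in> P \<Longrightarrow> (\<forall>k\<in>E. (\<Sum>x\<in>S. W p x * f k x) = 0) \<and> W p p = 1 \<and> (\<forall>p'\<in>P. p' \<noteq> p \<longrightarrow> W p p' = 0)"
    by metis
  define c where "c p = (\<Sum>x\<in>S. W p x * f e x)" for p
  show ?case
  proof (cases "\<forall>p\<in>P. c p = 0")
    case True
    then show ?thesis
      using PS cardP insert.hyps W unfolding c_def by (intro exI[of _ P]) (auto intro: le_SucI)
  next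
    case False
    then obtain p0 where p0: "p0 \<in> P" "c p0 \<noteq> 0" by blast
    have "finite P" using PS \<open>finite S\<close> finite_subset by blast
    show ?thesis
    proof (rule exI[of _ "P - {p0}"], intro conjI ballI)
      show "P - {p0} \<subseteq> S" using PS by auto
      show "card S \<le> card (P - {p0}) + card (insert e E)"
        using cardP insert.hyps p0(1) \<open>finite P\<close> by (simp add: card_Diff_singleton)
    next
      fix p assume p: "p \<in> P - {p0}"
      \<comment> \<open>Gaussian elimination: subtract a multiple of the vector of \<open>p0\<close> to kill the new
        functional.\<close>
      define w where "w x = W p x - (c p / c p0) * W p0 x" for x
      have "(\<Sum>x\<in>S. w x * f k x) = 0" if k: "k \<in> insert e E" for k
      proof -
        have "(\<Sum>x\<in>S. w x * f k x)
            = (\<Sum>x\<in>S. W p x * f k x) - (c p / c p0) * (\<Sum>x\<in>S. W p0 x * f k x)"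
          unfolding w_def by (simp add: algebra_simps sum_subtractf sum_distrib_left)
        then show ?thesis
          using k W p p0 unfolding c_def by auto
      qed
      moreover have "w p = 1" and "\<forall>p'\<in>P - {p0}. p' \<noteq> p \<longrightarrow> w p' = 0"
        using W p p0(1) unfolding w_def by auto
      ultimately show "\<exists>w. (\<forall>k\<in>insert e E. (\<Sum>x\<in>S. w x * f k x) = 0) \<and> w p = 1 \<and>
          (\<forall>p'\<in>P - {p0}. p' \<noteq> p \<longrightarrow> w p' = 0)"
        by blast
    qed
  qed
qed

lemma annihilator_vector_with_ones:
  fixes f :: "'e \<Rightarrow> 'b \<Rightarrow> 'f::field"
  assumes "finite S" and "finite E"
  obtains P v where "P \<subseteq> S" "card S \<le> card P + card E"
    "\<And>k. k \<in> E \<Longrightarrow> (\<Sum>x\<in>S. v x * f k x) = 0" "\<And>p. p \<in> P \<Longrightarrow> v p = 1"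
proof -
  obtain P W where P: "P \<subseteq> S" "card S \<le> card P + card E" and
    W: "\<And>p. p \<in> P \<Longrightarrow> (\<forall>k\<in>E. (\<Sum>x\<in>S. W p x * f k x) = 0) \<and> W p p = 1 \<and> (\<forall>p'\<in>P. p' \<noteq> p \<longrightarrow> W p p' = 0)"
    using annihilator_dual_family[OF assms, of f] by metis
  have "finite P" using P(1) \<open>finite S\<close> finite_subset by blast
  define v where "v x = (\<Sum>p\<in>P. W p x)" for x
  show thesis
  proof (rule that[OF P])
    fix k assume "k \<in> E"
    have "(\<Sum>x\<in>S. v x * f k x) = (\<Sum>p\<in>P. \<Sum>x\<in>S. W p x * f k x)"
      unfolding v_def by (subst sum.swap) (simp add: sum_distrib_right)
    also have "\<dots> = 0" using W \<open>k \<in> E\<close> by simp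
    finally show "(\<Sum>x\<in>S. v x * f k x) = 0" .
  next
    fix p assume "p \<in> P"
    have "v p = W p p + (\<Sum>p'\<in>P - {p}. W p' p)"
      unfolding v_def using \<open>finite P\<close> \<open>p \<in> P\<close> by (simp add: sum.remove)
    also have "(\<Sum>p'\<in>P - {p}. W p' p) = 0"
    proof (intro sum.neutral ballI)
      fix p' assume "p' \<in> P - {p}"
      then show "W p' p = 0" using W[of p'] \<open>p \<in> P\<close> by auto
    qed
    finally show "v p = 1" using W \<open>p \<in> P\<close> by simp
  qed
qed

lemma card_le_of_diagonal_factorization:
  fixes B :: "'b \<Rightarrow> 'b \<Rightarrow> 'f::field"
  assumes "finite P" and "finite K"
    and factor: "\<And>x y. x \<in> P \<Longrightarrow> y \<in> P \<Longrightarrow> B x y = (\<Sum>k\<in>K. \<phi> k x * \<psi> k y)"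
    and diag: "\<And>x. x \<in> P \<Longrightarrow> B x x \<noteq> 0"
    and off_diag: "\<And>x y. x \<in> P \<Longrightarrow> y \<in> P \<Longrightarrow> x \<noteq> y \<Longrightarrow> B x y = 0"
  shows "card P \<le> card K"
proof (rule ccontr)
  assume "\<not> card P \<le> card K"
  obtain P' v where P': "P' \<subseteq> P" "card P \<le> card P' + card K"
    and v: "\<And>k. k \<in> K \<Longrightarrow> (\<Sum>x\<in>P. v x * \<phi> k x) = 0" "\<And>p. p \<in> P' \<Longrightarrow> v p = 1"
    using annihilator_vector_with_ones[OF assms(1,2), of \<phi>] by metis
  from P' \<open>\<not> card P \<le> card K\<close> obtain p where "p \<in> P'" by fastforce
  with P' have p: "p \<in> P" "v p = 1" using v(2) by auto
  have "(\<Sum>x\<in>P. v x * B x p) = (\<Sum>k\<in>K. (\<Sum>x\<in>P. v x * \<phi> k x) * \<psi> k p)"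
    using factor p(1) by (simp add: sum_distrib_left sum_distrib_right mult.assoc sum.swap[of _ P])
  also have "\<dots> = 0" using v(1) by simp
  finally have "(\<Sum>x\<in>P. v x * B x p) = 0" .
  moreover have "(\<Sum>x\<in>P. v x * B x p) = v p * B p p"
    using off_diag p(1) \<open>finite P\<close> by (subst sum.remove[of _ p]) (auto intro: sum.neutral)
  ultimately show False using diag p by simp
qed

lemma exists_vertex_with_small_degree:
  fixes N :: "'b \<Rightarrow> 'b \<Rightarrow> bool"
  assumes "finite V" "V \<noteq> {}" and outdeg: "\<And>x. x \<in> V \<Longrightarrow> card {y\<in>V. y \<noteq> x \<and> N x y} \<le> d"
  shows "\<exists>x\<in>V. card {y\<in>V. y \<noteq> x \<and> (N x y \<or> N y x)} \<le> 2 * d"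
proof (rule ccontr)
  assume no_small: "\<not> ?thesis"
  define out where "out x = card {y\<in>V. y \<noteq> x \<and> N x y}" for x
  define inn where "inn x = card {y\<in>V. y \<noteq> x \<and> N y x}" for x
  have deg: "card {y\<in>V. y \<noteq> x \<and> (N x y \<or> N y x)} \<le> out x + inn x" for x
  proof -
    have split: "{y\<in>V. y \<noteq> x \<and> (N x y \<or> N y x)} = {y\<in>V. y \<noteq> x \<and> N x y} \<union> {y\<in>V. y \<noteq> x \<and> N y x}"
      by auto
    show ?thesis unfolding out_def inn_def split by (rule card_Un_le)
  qed
  have count: "card {y\<in>V. R y} = (\<Sum>y\<in>V. if R y then 1 else 0)" for R
    using sum.inter_filter[of V "\<lambda>_. 1::nat" R] \<open>finite V\<close> by simp
  have "(\<Sum>x\<in>V. inn x) = (\<Sum>x\<in>V. out x)"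
    unfolding inn_def out_def count by (subst sum.swap) (intro sum.cong refl; auto)
  then have "(\<Sum>x\<in>V. out x + inn x) \<le> (\<Sum>x\<in>V. 2 * d)"
    using outdeg sum_mono[of V out "\<lambda>_. d"] by (simp add: sum.distrib out_def)
  moreover have "(\<Sum>x\<in>V. 2 * d) < (\<Sum>x\<in>V. out x + inn x)"
    using no_small deg assms(1,2) by (intro sum_strict_mono) (auto simp: not_le intro: less_le_trans)
  ultimately show False by simp
qed

lemma independent_set_of_bounded_outdegree:
  fixes N :: "'b \<Rightarrow> 'b \<Rightarrow> bool"
  assumes "finite V" and "\<And>x. x \<in> V \<Longrightarrow> card {y\<in>V. y \<noteq> x \<and> N x y} \<le> d"
  shows "\<exists>I\<subseteq>V. card V \<le> (2 * d + 1) * card I \<and> (\<forall>x\<in>I. \<forall>y\<in>I. x \<noteq> y \<longrightarrow> \<not> N x y)"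
  using assms
proof (induction "card V" arbitrary: V rule: less_induct)
  case less
  show ?case
  proof (cases "V = {}")
    case True
    then show ?thesis by auto
  next
    case False
    \<comment> \<open>Greedily keep a vertex of small total degree and discard its neighbours.\<close>
    obtain x0 where x0: "x0 \<in> V" "card {y\<in>V. y \<noteq> x0 \<and> (N x0 y \<or> N y x0)} \<le> 2 * d"
      using exists_vertex_with_small_degree[OF less.prems(1) False less.prems(2)] by blast
    define Nb where "Nb = insert x0 {y\<in>V. y \<noteq> x0 \<and> (N x0 y \<or> N y x0)}"
    define V' where "V' = V - Nb"
    have "finite Nb" "finite V'" using less.prems(1) by (auto simp: Nb_def V'_def)
    have "card Nb \<le> 2 * d + 1"
      using x0(2) less.prems(1) unfolding Nb_def by (simp add: card_insert_if)
    moreover have "card V \<le> card V' + card Nb"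
    proof -
      have "card V \<le> card (V' \<union> Nb)"
        using \<open>finite V'\<close> \<open>finite Nb\<close> unfolding V'_def by (intro card_mono) auto
      then show ?thesis using card_Un_le[of V' Nb] by linarith
    qed
    ultimately have card_V: "card V \<le> card V' + (2 * d + 1)" by linarith
    have smaller: "card V' < card V"
      unfolding V'_def Nb_def using x0(1) less.prems(1) by (intro psubset_card_mono) auto
    have outdeg': "card {y\<in>V'. y \<noteq> x \<and> N x y} \<le> d" if "x \<in> V'" for x
    proof -
      have "card {y\<in>V'. y \<noteq> x \<and> N x y} \<le> card {y\<in>V. y \<noteq> x \<and> N x y}"
        using less.prems(1) unfolding V'_def by (intro card_mono) auto
      also have "\<dots> \<le> d" using that less.prems(2) unfolding V'_def by blast
      finally show ?thesis .
    qed
    obtain I where I: "I \<subseteq> V'" "card V' \<le> (2 * d + 1) * card I"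
        "\<forall>x\<in>I. \<forall>y\<in>I. x \<noteq> y \<longrightarrow> \<not> N x y"
      using less.hyps[OF smaller \<open>finite V'\<close> outdeg'] by blast
    have "x0 \<notin> I" "finite I"
      using I(1) \<open>finite V'\<close> finite_subset unfolding V'_def Nb_def by auto
    then have "card V \<le> (2 * d + 1) * card (insert x0 I)"
      using card_V I(2) by simp
    moreover have "insert x0 I \<subseteq> V" using I(1) x0(1) unfolding V'_def by auto
    moreover have "\<not> N x0 y \<and> \<not> N y x0" if "y \<in> I" for y
      using that I(1) unfolding V'_def Nb_def by auto
    ultimately show ?thesis
      using I(3) by (intro exI[of _ "insert x0 I"]) blast
  qed
qed

lemma contract_slice_decomposition:
  fixes T :: "'b \<Rightarrow> 'b \<Rightarrow> 'b \<Rightarrow> 'f::field"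
  assumes "finite EA" "finite EB"
    and dec: "\<And>x y z. x \<in> S \<Longrightarrow> y \<in> S \<Longrightarrow> z \<in> S \<Longrightarrow>
      T x y z = (\<Sum>\<alpha>\<in>EA. fa \<alpha> x * ga \<alpha> y z) + (\<Sum>\<alpha>\<in>EB. fb \<alpha> y * gb \<alpha> x z)
        + (\<Sum>\<alpha>\<in>EC. fc \<alpha> z * gc \<alpha> x y)"
    and annihilates: "\<And>\<alpha>. \<alpha> \<in> EC \<Longrightarrow> (\<Sum>z\<in>S. v z * fc \<alpha> z) = 0"
  shows "\<exists>\<phi> \<psi>. \<forall>x\<in>S. \<forall>y\<in>S. (\<Sum>z\<in>S. v z * T x y z) = (\<Sum>k\<in>EA <+> EB. \<phi> k x * \<psi> k y)"
proof -
  define \<phi> where "\<phi> k x = case_sum (\<lambda>\<alpha>. fa \<alpha> x) (\<lambda>\<alpha>. \<Sum>z\<in>S. v z * gb \<alpha> x z) k" for k x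
  define \<psi> where "\<psi> k y = case_sum (\<lambda>\<alpha>. \<Sum>z\<in>S. v z * ga \<alpha> y z) (\<lambda>\<alpha>. fb \<alpha> y) k" for k y
  have "(\<Sum>z\<in>S. v z * T x y z) = (\<Sum>k\<in>EA <+> EB. \<phi> k x * \<psi> k y)" if "x \<in> S" "y \<in> S" for x y
  proof -
    have "(\<Sum>z\<in>S. v z * T x y z) = (\<Sum>\<alpha>\<in>EA. fa \<alpha> x * (\<Sum>z\<in>S. v z * ga \<alpha> y z))
        + (\<Sum>\<alpha>\<in>EB. (\<Sum>z\<in>S. v z * gb \<alpha> x z) * fb \<alpha> y) + (\<Sum>\<alpha>\<in>EC. (\<Sum>z\<in>S. v z * fc \<alpha> z) * gc \<alpha> x y)"
      using dec that
      by (simp add: distrib_left sum.distrib sum_distrib_left sum_distrib_right mult_ac sum.swap[of _ S])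
    then show ?thesis using assms(1,2) annihilates by (simp add: sum.Plus \<phi>_def \<psi>_def)
  qed
  then show ?thesis by blast
qed

lemma card_support_of_contraction_le:
  fixes T :: "'b \<Rightarrow> 'b \<Rightarrow> 'b \<Rightarrow> 'f::semiring_0"
  assumes "finite S" "P \<subseteq> S"
  shows "card {y\<in>P. y \<noteq> x \<and> (\<Sum>z\<in>S. v z * T x y z) \<noteq> 0}
    \<le> card {y\<in>S. y \<noteq> x \<and> (\<exists>z\<in>S. T x y z \<noteq> 0)}"
proof (intro card_mono subsetI)
  fix y assume "y \<in> {y\<in>P. y \<noteq> x \<and> (\<Sum>z\<in>S. v z * T x y z) \<noteq> 0}"
  then have "y \<in> S" "y \<noteq> x" "(\<Sum>z\<in>S. v z * T x y z) \<noteq> 0" using assms(2) by auto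
  moreover have "\<exists>z\<in>S. v z * T x y z \<noteq> 0"
  proof (rule ccontr)
    assume "\<not> (\<exists>z\<in>S. v z * T x y z \<noteq> 0)"
    then have "(\<Sum>z\<in>S. v z * T x y z) = 0" by (intro sum.neutral) blast
    with \<open>(\<Sum>z\<in>S. v z * T x y z) \<noteq> 0\<close> show False by contradiction
  qed
  ultimately show "y \<in> {y\<in>S. y \<noteq> x \<and> (\<exists>z\<in>S. T x y z \<noteq> 0)}" by force
qed (use assms(1) in simp)

text \<open>Tao's slice-rank bound for a tensor that is only diagonal up to noise: the support in the
  second slot is merely assumed sparse, which costs the factor \<open>2d + 1\<close>.\<close>

lemma card_le_of_slice_decomposition:
  fixes T :: "'b \<Rightarrow> 'b \<Rightarrow> 'b \<Rightarrow> 'f::field"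
  assumes "finite S" "finite EA" "finite EB" "finite EC"
    and dec: "\<And>x y z. x \<in> S \<Longrightarrow> y \<in> S \<Longrightarrow> z \<in> S \<Longrightarrow>
      T x y z = (\<Sum>\<alpha>\<in>EA. fa \<alpha> x * ga \<alpha> y z) + (\<Sum>\<alpha>\<in>EB. fb \<alpha> y * gb \<alpha> x z)
        + (\<Sum>\<alpha>\<in>EC. fc \<alpha> z * gc \<alpha> x y)"
    and diag: "\<And>x. x \<in> S \<Longrightarrow> T x x x \<noteq> 0"
    and off_diag: "\<And>x z. x \<in> S \<Longrightarrow> z \<in> S \<Longrightarrow> z \<noteq> x \<Longrightarrow> T x x z = 0"
    and sparse: "\<And>x. x \<in> S \<Longrightarrow> card {y\<in>S. y \<noteq> x \<and> (\<exists>z\<in>S. T x y z \<noteq> 0)} \<le> d"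
  shows "card S \<le> card EC + (2 * d + 1) * (card EA + card EB)"
proof -
  obtain P v where P: "P \<subseteq> S" "card S \<le> card P + card EC"
    and v: "\<And>\<alpha>. \<alpha> \<in> EC \<Longrightarrow> (\<Sum>z\<in>S. v z * fc \<alpha> z) = 0" "\<And>p. p \<in> P \<Longrightarrow> v p = 1"
    using annihilator_vector_with_ones[OF assms(1,4), of fc] by blast
  \<comment> \<open>Contracting the third slot with \<open>v\<close> kills the third family of slices.\<close>
  define B where "B x y = (\<Sum>z\<in>S. v z * T x y z)" for x y
  have "\<exists>\<phi> \<psi>. \<forall>x\<in>S. \<forall>y\<in>S. B x y = (\<Sum>k\<in>EA <+> EB. \<phi> k x * \<psi> k y)"
    unfolding B_def
    by (rule contract_slice_decomposition[OF assms(2,3), where fc = fc and gc = gc and EC = EC])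
      (fact dec, fact v(1))
  then obtain \<phi> \<psi> where factor: "\<forall>x\<in>S. \<forall>y\<in>S. B x y = (\<Sum>k\<in>EA <+> EB. \<phi> k x * \<psi> k y)"
    by blast
  have B_diag: "B x x = v x * T x x x" if "x \<in> S" for x
    unfolding B_def using off_diag that \<open>finite S\<close>
    by (subst sum.remove[of _ x]) (auto intro: sum.neutral)
  have sparse_B: "card {y\<in>P. y \<noteq> x \<and> B x y \<noteq> 0} \<le> d" if "x \<in> P" for x
    unfolding B_def using that P(1)
    by (intro order_trans[OF card_support_of_contraction_le[OF \<open>finite S\<close> P(1)] sparse]) auto
  have "finite P" by (rule finite_subset[OF P(1) \<open>finite S\<close>])
  obtain I where I: "I \<subseteq> P" "card P \<le> (2 * d + 1) * card I"
      "\<forall>x\<in>I. \<forall>y\<in>I. x \<noteq> y \<longrightarrow> \<not> B x y \<noteq> 0"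
    using independent_set_of_bounded_outdegree[OF \<open>finite P\<close> sparse_B] by blast
  have "card I \<le> card (EA <+> EB)"
  proof (rule card_le_of_diagonal_factorization[of I _ B \<phi> \<psi>])
    show "finite I" by (rule finite_subset[OF I(1) \<open>finite P\<close>])
    show "finite (EA <+> EB)" using assms(2,3) by simp
    show "B x y = (\<Sum>k\<in>EA <+> EB. \<phi> k x * \<psi> k y)" if "x \<in> I" "y \<in> I" for x y
      using factor that I(1) P(1) by blast
    show "B x x \<noteq> 0" if "x \<in> I" for x
    proof -
      have "x \<in> P" "x \<in> S" using that I(1) P(1) by auto
      then show ?thesis using B_diag diag v(2) by simp
    qed
    show "B x y = 0" if "x \<in> I" "y \<in> I" "x \<noteq> y" for x y
      using I(3) that by blast
  qed
  then have "card I \<le> card EA + card EB" using assms(2,3) by (simp add: card_Plus)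
  then have "card P \<le> (2 * d + 1) * (card EA + card EB)"
    using I(2) by (meson le_trans mult_le_mono2)
  then show ?thesis using P(2) by linarith
qed

section \<open>The polynomial method over finite fields\<close>

lemma two_le_card_field: "2 \<le> CARD('a::{field,finite})"
proof -
  have "card {0::'a, 1} \<le> CARD('a)" by (rule card_mono) auto
  then show ?thesis by simp
qed

lemma finite_field_power_card_minus_one:
  fixes u :: "'a::{field,finite}"
  assumes "u \<noteq> 0"
  shows "u ^ (CARD('a) - 1) = 1"
proof -
  have "(\<Prod>y\<in>UNIV - {0}. u * y) = (\<Prod>y\<in>UNIV - {0}. y)"
    by (rule prod.reindex_bij_witness[of _ "\<lambda>y. y / u" "\<lambda>y. u * y"]) (use assms in auto)
  moreover have "(\<Prod>y\<in>UNIV - {0}. u * y) = u ^ (CARD('a) - 1) * (\<Prod>y\<in>UNIV - {0::'a}. y)"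
    by (simp add: prod.distrib card_Diff_singleton)
  moreover have "(\<Prod>y\<in>UNIV - {0::'a}. y) \<noteq> 0" by simp
  ultimately show ?thesis by simp
qed

lemma indicator_zero_eq_prod:
  fixes w :: "'a::{field,finite}^'n"
  shows "(if w = 0 then 1 else 0) = (\<Prod>r\<in>UNIV. 1 - (w$r) ^ (CARD('a) - 1))"
proof (cases "w = 0")
  case True
  then show ?thesis using two_le_card_field[where 'a='a] by (simp add: power_0_left)
next
  case False
  then obtain r where "w$r \<noteq> 0" by (metis vec_eq_iff zero_index)
  then have "(\<Prod>r\<in>UNIV. 1 - (w$r) ^ (CARD('a) - 1)) = 0"
    using finite_field_power_card_minus_one by (intro prod_zero) auto
  then show ?thesis using False by simp
qed

definition trinomial_exponents :: "nat \<Rightarrow> (nat \<times> nat \<times> nat) set" where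
  "trinomial_exponents d = {(i, j, l). i + j + l \<le> d}"

lemma finite_trinomial_exponents: "finite (trinomial_exponents d)"
  by (rule finite_subset[of _ "{..d} \<times> {..d} \<times> {..d}"]) (auto simp: trinomial_exponents_def)

lemma trinomial_power_expansion:
  fixes s1 s2 s3 :: "'a::comm_ring_1"
  shows "(s1 + s2 + s3) ^ d = (\<Sum>(i, j, l)\<in>{(i, j, l). i + j + l = d}.
           of_nat ((d choose i) * ((d - i) choose j)) * s1 ^ i * s2 ^ j * s3 ^ l)"
proof -
  have "(s1 + s2 + s3) ^ d = (\<Sum>i\<le>d. \<Sum>j\<le>d - i.
          of_nat ((d choose i) * ((d - i) choose j)) * s1 ^ i * s2 ^ j * s3 ^ (d - i - j))"
    by (simp add: add.assoc binomial_ring[of s1] binomial_ring[of s2] sum_distrib_left mult_ac diff_diff_add)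
  also have "\<dots> = (\<Sum>(i, j)\<in>(SIGMA i:{..d}. {..d - i}).
          of_nat ((d choose i) * ((d - i) choose j)) * s1 ^ i * s2 ^ j * s3 ^ (d - i - j))"
    by (subst sum.Sigma) auto
  also have "\<dots> = (\<Sum>(i, j, l)\<in>{(i, j, l). i + j + l = d}.
           of_nat ((d choose i) * ((d - i) choose j)) * s1 ^ i * s2 ^ j * s3 ^ l)"
    by (rule sum.reindex_bij_witness[of _ "\<lambda>(i, j, l). (i, j)" "\<lambda>(i, j). (i, j, d - i - j)"]) auto
  finally show ?thesis .
qed

lemma one_minus_trinomial_power:
  "\<exists>C. \<forall>s1 s2 s3 :: 'a::comm_ring_1. 1 - (s1 + s2 + s3) ^ d =
     (\<Sum>(i, j, l)\<in>trinomial_exponents d. C (i, j, l) * s1 ^ i * s2 ^ j * s3 ^ l)"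
proof -
  define M where "M = {(i, j, l). i + j + l = d}"
  define c :: "nat \<times> nat \<times> nat \<Rightarrow> 'a" where
    "c = (\<lambda>(i, j, l). of_nat ((d choose i) * ((d - i) choose j)))"
  define C where "C t = (if t = (0, 0, 0) then 1 else 0) - (if t \<in> M then c t else 0)" for t
  have "M \<subseteq> trinomial_exponents d" "(0, 0, 0) \<in> trinomial_exponents d"
    unfolding M_def trinomial_exponents_def by auto
  have "1 - (s1 + s2 + s3) ^ d =
      (\<Sum>(i, j, l)\<in>trinomial_exponents d. C (i, j, l) * s1 ^ i * s2 ^ j * s3 ^ l)"
    for s1 s2 s3 :: 'a
  proof -
    define m where "m = (\<lambda>(i, j, l). s1 ^ i * s2 ^ j * s3 ^ l)"
    have "(\<Sum>t\<in>trinomial_exponents d. if t = (0, 0, 0) then m t else 0) = 1"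
      using \<open>(0, 0, 0) \<in> trinomial_exponents d\<close> finite_trinomial_exponents[of d]
      by (simp add: m_def)
    moreover have "(\<Sum>t\<in>trinomial_exponents d. if t \<in> M then c t * m t else 0) = (s1 + s2 + s3) ^ d"
      using sum.inter_restrict[of "trinomial_exponents d" "\<lambda>t. c t * m t" M]
        finite_trinomial_exponents[of d] \<open>M \<subseteq> trinomial_exponents d\<close>
      by (simp add: Int_absorb1 trinomial_power_expansion)
        (simp add: M_def c_def m_def case_prod_beta mult.assoc)
    ultimately have "1 - (s1 + s2 + s3) ^ d = (\<Sum>t\<in>trinomial_exponents d.
        (if t = (0, 0, 0) then m t else 0) - (if t \<in> M then c t * m t else 0))"
      by (simp add: sum_subtractf)
    also have "\<dots> = (\<Sum>t\<in>trinomial_exponents d. C t * m t)"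
      by (intro sum.cong) (auto simp: C_def m_def)
    finally show ?thesis by (simp add: m_def case_prod_beta mult.assoc)
  qed
  then show ?thesis by blast
qed

definition vec_monomial :: "('n::finite \<Rightarrow> nat) \<Rightarrow> 'a::comm_ring_1^'n \<Rightarrow> 'a" where
  "vec_monomial \<alpha> x = (\<Prod>r\<in>UNIV. (x$r) ^ \<alpha> r)"

definition low_exponents :: "nat \<Rightarrow> ('n::finite \<Rightarrow> nat) set" where
  "low_exponents q = {\<alpha>. (\<forall>r. \<alpha> r < q) \<and> 3 * sum \<alpha> UNIV \<le> (q - 1) * CARD('n)}"

lemma finite_low_exponents: "finite (low_exponents q)"
  by (rule finite_subset[OF _ finite_PiE[of UNIV "\<lambda>_. {..<q}"]]) (auto simp: low_exponents_def PiE_iff)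

lemma sum_factor_through:
  fixes u :: "'e \<Rightarrow> 'c::semiring_0"
  assumes "finite A" "finite E" "e ` A \<subseteq> E"
  shows "(\<Sum>x\<in>A. u (e x) * v x) = (\<Sum>y\<in>E. u y * (\<Sum>x\<in>{x\<in>A. e x = y}. v x))"
proof -
  have "(\<Sum>x\<in>A. u (e x) * v x) = (\<Sum>y\<in>E. \<Sum>x\<in>{x\<in>A. e x = y}. u (e x) * v x)"
    by (rule sum.group[symmetric, OF assms])
  also have "\<dots> = (\<Sum>y\<in>E. u y * (\<Sum>x\<in>{x\<in>A. e x = y}. v x))"
  proof (rule sum.cong[OF refl])
    fix y
    have "(\<Sum>x\<in>{x\<in>A. e x = y}. u (e x) * v x) = (\<Sum>x\<in>{x\<in>A. e x = y}. u y * v x)"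
      by (rule sum.cong) auto
    then show "(\<Sum>x\<in>{x\<in>A. e x = y}. u (e x) * v x) = u y * (\<Sum>x\<in>{x\<in>A. e x = y}. v x)"
      by (simp only: sum_distrib_left)
  qed
  finally show ?thesis .
qed

lemma indicator_zero_sum_expansion:
  fixes c a b :: "'a::{field,finite}^'n"
  assumes C: "\<forall>s1 s2 s3 :: 'a. 1 - (s1 + s2 + s3) ^ d =
      (\<Sum>(i, j, l)\<in>trinomial_exponents d. C (i, j, l) * s1 ^ i * s2 ^ j * s3 ^ l)"
    and d: "d = CARD('a) - 1"
  shows "(if c + a + b = 0 then 1 else 0) = (\<Sum>g\<in>PiE UNIV (\<lambda>_. trinomial_exponents d).
     (\<Prod>r\<in>UNIV. C (g r)) * vec_monomial (\<lambda>r. fst (g r)) c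
       * vec_monomial (\<lambda>r. fst (snd (g r))) a * vec_monomial (\<lambda>r. snd (snd (g r))) b)"
proof -
  have "(if c + a + b = 0 then 1 else 0) = (\<Prod>r\<in>UNIV. 1 - (c$r + a$r + b$r) ^ d)"
    unfolding d by (subst indicator_zero_eq_prod) simp
  also have "\<dots> = (\<Prod>r\<in>UNIV. \<Sum>t\<in>trinomial_exponents d.
      C t * (c$r) ^ fst t * (a$r) ^ fst (snd t) * (b$r) ^ snd (snd t))"
    using C by (simp add: case_prod_beta)
  also have "\<dots> = (\<Sum>g\<in>PiE UNIV (\<lambda>_. trinomial_exponents d). \<Prod>r\<in>UNIV.
      C (g r) * (c$r) ^ fst (g r) * (a$r) ^ fst (snd (g r)) * (b$r) ^ snd (snd (g r)))"
    by (rule prod_sum_PiE) (auto simp: finite_trinomial_exponents)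
  finally show ?thesis by (simp add: vec_monomial_def prod.distrib)
qed

lemma sum_split_into_slices:
  fixes \<kappa> :: "'g \<Rightarrow> 'c::comm_semiring_0" and u :: "'e \<Rightarrow> 'x \<Rightarrow> 'c"
  assumes "finite G" "finite E"
    and cover: "\<And>g. g \<in> G \<Longrightarrow> e1 g \<in> E \<or> e2 g \<in> E \<or> e3 g \<in> E"
  shows "\<exists>H1 H2 H3. \<forall>c a b. (\<Sum>g\<in>G. \<kappa> g * u (e1 g) c * u (e2 g) a * u (e3 g) b) =
     (\<Sum>\<alpha>\<in>E. u \<alpha> c * H1 \<alpha> a b) + (\<Sum>\<alpha>\<in>E. u \<alpha> a * H2 \<alpha> c b) + (\<Sum>\<alpha>\<in>E. u \<alpha> b * H3 \<alpha> c a)"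
proof (intro exI allI)
  fix c a b
  define F where "F g = \<kappa> g * u (e1 g) c * u (e2 g) a * u (e3 g) b" for g
  define G1 where "G1 = {g\<in>G. e1 g \<in> E}"
  define G2 where "G2 = {g\<in>G. e1 g \<notin> E \<and> e2 g \<in> E}"
  define G3 where "G3 = {g\<in>G. e1 g \<notin> E \<and> e2 g \<notin> E}"
  have "G = G1 \<union> G2 \<union> G3" "G1 \<inter> G2 = {}" "(G1 \<union> G2) \<inter> G3 = {}"
    unfolding G1_def G2_def G3_def by auto
  moreover have "finite G1" "finite G2" "finite G3"
    using \<open>finite G\<close> unfolding G1_def G2_def G3_def by auto
  ultimately have "sum F G = sum F G1 + sum F G2 + sum F G3"
    by (simp add: sum.union_disjoint)
  also have "sum F G1 = (\<Sum>\<alpha>\<in>E. u \<alpha> c * (\<Sum>g\<in>{g\<in>G1. e1 g = \<alpha>}. \<kappa> g * u (e2 g) a * u (e3 g) b))"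
    using sum_factor_through[of G1 E e1 "\<lambda>\<alpha>. u \<alpha> c" "\<lambda>g. \<kappa> g * u (e2 g) a * u (e3 g) b"] assms(1,2)
    unfolding F_def G1_def by (auto simp: mult_ac)
  also have "sum F G2 = (\<Sum>\<alpha>\<in>E. u \<alpha> a * (\<Sum>g\<in>{g\<in>G2. e2 g = \<alpha>}. \<kappa> g * u (e1 g) c * u (e3 g) b))"
    using sum_factor_through[of G2 E e2 "\<lambda>\<alpha>. u \<alpha> a" "\<lambda>g. \<kappa> g * u (e1 g) c * u (e3 g) b"] assms(1,2)
    unfolding F_def G2_def by (auto simp: mult_ac)
  also have "sum F G3 = (\<Sum>\<alpha>\<in>E. u \<alpha> b * (\<Sum>g\<in>{g\<in>G3. e3 g = \<alpha>}. \<kappa> g * u (e1 g) c * u (e2 g) a))"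
    using sum_factor_through[of G3 E e3 "\<lambda>\<alpha>. u \<alpha> b" "\<lambda>g. \<kappa> g * u (e1 g) c * u (e2 g) a"]
      assms(1,2) cover
    unfolding F_def G3_def by (auto simp: mult_ac)
  finally show "(\<Sum>g\<in>G. \<kappa> g * u (e1 g) c * u (e2 g) a * u (e3 g) b) =
      (\<Sum>\<alpha>\<in>E. u \<alpha> c * (\<lambda>\<alpha> a b. \<Sum>g\<in>{g\<in>G1. e1 g = \<alpha>}. \<kappa> g * u (e2 g) a * u (e3 g) b) \<alpha> a b)
    + (\<Sum>\<alpha>\<in>E. u \<alpha> a * (\<lambda>\<alpha> c b. \<Sum>g\<in>{g\<in>G2. e2 g = \<alpha>}. \<kappa> g * u (e1 g) c * u (e3 g) b) \<alpha> c b)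
    + (\<Sum>\<alpha>\<in>E. u \<alpha> b * (\<lambda>\<alpha> c a. \<Sum>g\<in>{g\<in>G3. e3 g = \<alpha>}. \<kappa> g * u (e1 g) c * u (e2 g) a) \<alpha> c a)"
    unfolding F_def by simp
qed

lemma low_exponents_cover:
  fixes e1 e2 e3 :: "'n::finite \<Rightarrow> nat"
  assumes "0 < q" and bound: "\<And>r. e1 r + e2 r + e3 r \<le> q - 1"
  shows "e1 \<in> low_exponents q \<or> e2 \<in> low_exponents q \<or> e3 \<in> low_exponents q"
proof -
  have "sum e1 UNIV + sum e2 UNIV + sum e3 UNIV \<le> (q - 1) * CARD('n)"
    using sum_mono[of UNIV "\<lambda>r. e1 r + e2 r + e3 r" "\<lambda>_. q - 1"] bound
    by (simp add: sum.distrib mult.commute)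
  moreover have "e1 r < q" "e2 r < q" "e3 r < q" for r
    using bound[of r] \<open>0 < q\<close> by linarith+
  ultimately show ?thesis unfolding low_exponents_def by auto
qed

lemma indicator_zero_slice_decomposition:
  "\<exists>H1 H2 H3. \<forall>c a b :: 'a::{field,finite}^'n::finite.
     (if c + a + b = 0 then 1 else 0) =
       (\<Sum>\<alpha>\<in>low_exponents CARD('a). vec_monomial \<alpha> c * H1 \<alpha> a b)
     + (\<Sum>\<alpha>\<in>low_exponents CARD('a). vec_monomial \<alpha> a * H2 \<alpha> c b)
     + (\<Sum>\<alpha>\<in>low_exponents CARD('a). vec_monomial \<alpha> b * H3 \<alpha> c a)"
proof -
  define d where "d = CARD('a) - 1"
  obtain C :: "nat \<times> nat \<times> nat \<Rightarrow> 'a" where C: "\<forall>s1 s2 s3 :: 'a. 1 - (s1 + s2 + s3) ^ d =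
      (\<Sum>(i, j, l)\<in>trinomial_exponents d. C (i, j, l) * s1 ^ i * s2 ^ j * s3 ^ l)"
    using one_minus_trinomial_power by blast
  \<comment> \<open>Each monomial has total degree at most \<open>d n\<close>, so one of its three partial degrees
    is at most \<open>d n / 3\<close>.\<close>
  have cover: "(\<lambda>r. fst (g r)) \<in> low_exponents CARD('a)
      \<or> (\<lambda>r. fst (snd (g r))) \<in> low_exponents CARD('a)
      \<or> (\<lambda>r. snd (snd (g r))) \<in> low_exponents CARD('a)"
    if "g \<in> PiE (UNIV :: 'n set) (\<lambda>_. trinomial_exponents d)" for g
    using that unfolding d_def trinomial_exponents_def
    by (intro low_exponents_cover) (auto simp: PiE_iff case_prod_beta)
  have "finite (PiE (UNIV :: 'n set) (\<lambda>_. trinomial_exponents d))"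
    by (simp add: finite_PiE finite_trinomial_exponents)
  from sum_split_into_slices[OF this finite_low_exponents cover,
      where \<kappa> = "\<lambda>g. \<Prod>r\<in>UNIV. C (g r)" and u = vec_monomial]
  show ?thesis unfolding indicator_zero_sum_expansion[OF C d_def] .
qed

section \<open>Counting low-degree exponents\<close>

lemma card_low_exponents_le_generating_bound:
  fixes x :: real
  assumes "0 < q" "0 < x" "x < 1"
  shows "real (card (low_exponents q :: ('n::finite \<Rightarrow> nat) set))
    \<le> ((\<Sum>i<q. x ^ i) / x powr ((real q - 1) / 3)) ^ CARD('n)"
proof -
  define E :: "('n \<Rightarrow> nat) set" where "E = low_exponents q"
  define Pi :: "('n \<Rightarrow> nat) set" where "Pi = PiE UNIV (\<lambda>_. {..<q})"
  define X where "X = (x powr ((real q - 1) / 3)) ^ CARD('n)"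
  have "X > 0" unfolding X_def using assms by simp
  \<comment> \<open>Rankin's trick: each low exponent \<open>\<alpha>\<close> satisfies \<open>x ^ |\<alpha>| \<ge> X\<close> since \<open>x < 1\<close>.\<close>
  have "1 \<le> x ^ sum \<alpha> UNIV / X" if "\<alpha> \<in> E" for \<alpha>
  proof -
    have "3 * sum \<alpha> UNIV \<le> (q - 1) * CARD('n)"
      using that unfolding E_def low_exponents_def by simp
    then have "real (3 * sum \<alpha> UNIV) \<le> real ((q - 1) * CARD('n))"
      by (rule of_nat_mono)
    then have "3 * real (sum \<alpha> UNIV) \<le> (real q - 1) * real CARD('n)"
      using assms(1) by (simp only: of_nat_mult of_nat_diff) simp
    moreover have "X = x powr (real CARD('n) * ((real q - 1) / 3))"
      unfolding X_def using assms(2) by (simp add: powr_power)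
    ultimately have "X \<le> x powr real (sum \<alpha> UNIV)"
      using assms(2,3) by (simp only:) (intro powr_mono', auto simp: mult.commute)
    then show ?thesis using \<open>X > 0\<close> powr_realpow[OF assms(2), of "sum \<alpha> UNIV"] by simp
  qed
  then have "real (card E) \<le> (\<Sum>\<alpha>\<in>E. x ^ sum \<alpha> UNIV / X)"
    using sum_mono[of E "\<lambda>_. 1" "\<lambda>\<alpha>. x ^ sum \<alpha> UNIV / X"] by simp
  also have "\<dots> \<le> (\<Sum>\<alpha>\<in>Pi. x ^ sum \<alpha> UNIV / X)"
    using assms \<open>X > 0\<close> unfolding E_def Pi_def low_exponents_def
    by (intro sum_mono2 finite_PiE) (auto simp: PiE_iff)
  also have "\<dots> = (\<Sum>\<alpha>\<in>Pi. x ^ sum \<alpha> UNIV) / X"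
    by (simp add: sum_divide_distrib)
  also have "(\<Sum>\<alpha>\<in>Pi. x ^ sum \<alpha> UNIV) = (\<Prod>r\<in>(UNIV :: 'n set). \<Sum>i<q. x ^ i)"
    unfolding Pi_def power_sum by (rule prod_sum_PiE[symmetric]) auto
  finally show ?thesis
    unfolding E_def X_def by (simp add: power_divide)
qed

lemma card_low_exponents_le:
  assumes "0 < q"
  shows "real (card (low_exponents q :: ('n::finite \<Rightarrow> nat) set)) \<le> Gamma_q q ^ CARD('n)"
proof -
  define f where "f x = (\<Sum>i<q. x ^ i) / x powr ((real q - 1) / 3)" for x :: real
  define r where "r = root CARD('n) (real (card (low_exponents q :: ('n \<Rightarrow> nat) set)))"
  have r_pow: "r ^ CARD('n) = real (card (low_exponents q :: ('n \<Rightarrow> nat) set))"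
    unfolding r_def by (simp add: real_root_pow_pos2)
  have "r \<le> f x" if "x \<in> {0<..<1}" for x
  proof -
    have "f x > 0" using that assms unfolding f_def by (auto intro!: divide_pos_pos sum_pos)
    moreover have "r ^ CARD('n) \<le> f x ^ CARD('n)"
      using card_low_exponents_le_generating_bound[of q x] that assms unfolding r_pow f_def by simp
    moreover obtain m where "CARD('n) = Suc m" using gr0_implies_Suc[OF zero_less_card_finite] by blast
    ultimately show ?thesis using power_le_imp_le_base[of r m "f x"] by simp
  qed
  then have "r \<le> (INF x\<in>{0<..<1::real}. f x)"
    by (intro cINF_greatest) auto
  moreover have "Gamma_q q = (INF x\<in>{0<..<1::real}. f x)"
    unfolding Gamma_q_def Jfun_def f_def using assms by simp
  ultimately show ?thesis
    unfolding r_pow[symmetric] by (intro power_mono) (auto simp: r_def)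
qed

section \<open>Many nontrivial solutions\<close>

lemma card_le_of_few_nontrivial_solutions:
  fixes a b :: "'b \<Rightarrow> 'a::{field,finite}^'n"
  assumes "finite S" "inj_on a S" "inj_on b S"
    and few: "\<And>i. i \<in> S \<Longrightarrow> card {(y, z)\<in>S \<times> S. (y, z) \<noteq> (i, i) \<and> a y + b z = a i + b i} \<le> d"
  shows "card S \<le> (4 * d + 3) * card (low_exponents CARD('a) :: ('n \<Rightarrow> nat) set)"
proof -
  define E :: "('n \<Rightarrow> nat) set" where "E = low_exponents CARD('a)"
  define T where "T x y z = (if - (a x + b x) + a y + b z = 0 then 1 else (0::'a))" for x y z
  obtain H1 H2 H3 where H: "\<And>c a b :: 'a^'n. (if c + a + b = 0 then 1 else 0) =
       (\<Sum>\<alpha>\<in>E. vec_monomial \<alpha> c * H1 \<alpha> a b) + (\<Sum>\<alpha>\<in>E. vec_monomial \<alpha> a * H2 \<alpha> c b)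
     + (\<Sum>\<alpha>\<in>E. vec_monomial \<alpha> b * H3 \<alpha> c a)"
    using indicator_zero_slice_decomposition unfolding E_def by blast
  have "card S \<le> card E + (2 * d + 1) * (card E + card E)"
  proof (rule card_le_of_slice_decomposition[of S E E E T])
    show "finite S" "finite E" "finite E" "finite E"
      by (simp_all add: \<open>finite S\<close> E_def finite_low_exponents)
    show "T x y z = (\<Sum>\<alpha>\<in>E. vec_monomial \<alpha> (- (a x + b x)) * H1 \<alpha> (a y) (b z))
      + (\<Sum>\<alpha>\<in>E. vec_monomial \<alpha> (a y) * H2 \<alpha> (- (a x + b x)) (b z))
      + (\<Sum>\<alpha>\<in>E. vec_monomial \<alpha> (b z) * H3 \<alpha> (- (a x + b x)) (a y))" for x y z
      unfolding T_def by (rule H)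
    show "T x x x \<noteq> 0" for x unfolding T_def by simp
    show "T x x z = 0" if "x \<in> S" "z \<in> S" "z \<noteq> x" for x z
      using that inj_onD[OF \<open>inj_on b S\<close>] unfolding T_def by (auto simp: algebra_simps)
    show "card {y\<in>S. y \<noteq> x \<and> (\<exists>z\<in>S. T x y z \<noteq> 0)} \<le> d" if "x \<in> S" for x
    proof -
      define NT where "NT = {(y, z)\<in>S \<times> S. (y, z) \<noteq> (x, x) \<and> a y + b z = a x + b x}"
      have "finite NT" unfolding NT_def
        by (rule finite_subset[of _ "S \<times> S"]) (auto simp: \<open>finite S\<close>)
      have "{y\<in>S. y \<noteq> x \<and> (\<exists>z\<in>S. T x y z \<noteq> 0)} \<subseteq> fst ` NT"
        unfolding NT_def T_def by (force simp: algebra_simps split: if_splits)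
      then have "card {y\<in>S. y \<noteq> x \<and> (\<exists>z\<in>S. T x y z \<noteq> 0)} \<le> card NT"
        using \<open>finite NT\<close> by (meson card_image_le card_mono finite_imageI le_trans)
      also have "\<dots> \<le> d" unfolding NT_def by (rule few[OF that])
      finally show ?thesis .
    qed
  qed
  then show ?thesis unfolding E_def by (simp add: algebra_simps)
qed

lemma exists_many_nontrivial_solutions:
  fixes a b :: "'b \<Rightarrow> 'a::{field,finite}^'n"
  assumes "finite S" "inj_on a S" "inj_on b S" "1 \<le> t"
    and large: "4 * real t * Gamma_q CARD('a) ^ CARD('n) \<le> real (card S)"
  shows "\<exists>i\<in>S. t \<le> card {(y, z)\<in>S \<times> S. (y, z) \<noteq> (i, i) \<and> a y + b z = a i + b i}"
proof (rule ccontr)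
  assume no_base: "\<not> ?thesis"
  define e where "e = real (card (low_exponents CARD('a) :: ('n \<Rightarrow> nat) set))"
  have "card S \<le> (4 * (t - 1) + 3) * card (low_exponents CARD('a) :: ('n \<Rightarrow> nat) set)"
    using no_base by (intro card_le_of_few_nontrivial_solutions[OF assms(1-3)]) (auto simp: not_le)
  then have "real (card S) \<le> real (4 * (t - 1) + 3) * e"
    unfolding e_def by (metis of_nat_le_iff of_nat_mult)
  also have "real (4 * (t - 1) + 3) = 4 * real t - 1" using \<open>1 \<le> t\<close> by (simp add: of_nat_diff)
  finally have "real (card S) \<le> 4 * real t * e - e" by (simp add: algebra_simps)
  moreover have "e \<le> Gamma_q CARD('a) ^ CARD('n)"
    unfolding e_def by (rule card_low_exponents_le) simp
  then have "4 * real t * e \<le> 4 * real t * Gamma_q CARD('a) ^ CARD('n)"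
    by (rule mult_left_mono) simp
  moreover have "(\<lambda>_. 0) \<in> (low_exponents CARD('a) :: ('n \<Rightarrow> nat) set)"
    by (simp add: low_exponents_def)
  then have "0 < e"
    unfolding e_def using finite_low_exponents card_gt_0_iff by (metis of_nat_0_less_iff empty_iff)
  ultimately show False using large by linarith
qed

lemma nontrivial_solution_avoids_base:
  assumes "inj_on a S" "inj_on b S" "i \<in> S" "y \<in> S" "z \<in> S" "(y, z) \<noteq> (i, i)"
    and "a y + b z = a i + (b i :: 'c::ab_group_add)"
  shows "y \<noteq> i" "z \<noteq> i"
  using assms inj_onD[OF assms(1)] inj_onD[OF assms(2)] by auto

lemma inj_on_scaled:
  fixes f :: "'b \<Rightarrow> 'a::field^'n"
  assumes "c \<noteq> 0" "inj_on f I"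
  shows "inj_on (\<lambda>i. c *s f i) I"
  using assms unfolding inj_on_def by simp

lemma inj_on_entry_of_disjoint_sols:
  assumes "\<forall>i\<in>I. \<forall>i'\<in>I. i \<noteq> i' \<longrightarrow> disjoint_sols k (X i) (X i')" "j < k"
  shows "inj_on (\<lambda>i. X i j) I"
proof (rule inj_onI, rule ccontr)
  fix i i' assume "i \<in> I" "i' \<in> I" "X i j = X i' j" "i \<noteq> i'"
  then have "X i j \<in> X i ` {..<k} \<inter> X i' ` {..<k}" using \<open>j < k\<close> by (metis IntI imageI lessThan_iff)
  then show False using assms(1) \<open>i \<in> I\<close> \<open>i' \<in> I\<close> \<open>i \<noteq> i'\<close> unfolding disjoint_sols_def by blast
qed

lemma is_solution_replace_same_class:
  fixes x :: "nat \<Rightarrow> 'a::field^'n"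
  assumes sol: "is_solution A m k x" and "j1 < k" "j2 < k" "j1 \<noteq> j2"
    and col: "\<forall>i<m. A i j2 = c * A i j1"
    and balance: "y1 + c *s y2 = x j1 + c *s x j2"
  shows "is_solution A m k (\<lambda>j. if j = j1 then y1 else if j = j2 then y2 else x j)"
  unfolding is_solution_def
proof (intro allI impI)
  fix i assume "i < m"
  define Y where "Y j = (if j = j1 then y1 else if j = j2 then y2 else x j)" for j
  have "A i j *s Y j = A i j *s x j + (if j = j1 then A i j1 *s (y1 - x j1) else 0)
      + (if j = j2 then A i j2 *s (y2 - x j2) else 0)" for j
    unfolding Y_def using \<open>j1 \<noteq> j2\<close> by (simp add: vector_ssub_ldistrib)
  then have "(\<Sum>j<k. A i j *s Y j)
      = (\<Sum>j<k. A i j *s x j) + A i j1 *s (y1 - x j1) + A i j2 *s (y2 - x j2)"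
    using \<open>j1 < k\<close> \<open>j2 < k\<close> by (simp add: sum.distrib)
  also have "(\<Sum>j<k. A i j *s x j) = 0" using sol \<open>i < m\<close> unfolding is_solution_def by blast
  also have "A i j2 *s (y2 - x j2) = A i j1 *s (c *s (y2 - x j2))"
    using col \<open>i < m\<close> by (simp add: vector_smult_assoc mult.commute)
  also have "0 + A i j1 *s (y1 - x j1) + A i j1 *s (c *s (y2 - x j2))
      = A i j1 *s ((y1 + c *s y2) - (x j1 + c *s x j2))"
    by (simp add: vector_ssub_ldistrib vector_add_ldistrib)
  also have "\<dots> = 0" using balance by simp
  finally show "(\<Sum>j<k. A i j *s Y j) = 0" .
qed

theorem corollary6p2:
  fixes A :: "nat \<Rightarrow> nat \<Rightarrow> 'a::{field,finite}"
    and X :: "nat \<Rightarrow> nat \<Rightarrow> 'a^'n"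
    and m k t L j1 j2 :: nat
  assumes "t \<ge> 1"
    and sols: "\<forall>i\<in>{1..L}. is_solution A m k (X i)"
    and disj: "\<forall>i\<in>{1..L}. \<forall>i'\<in>{1..L}. i \<noteq> i' \<longrightarrow> disjoint_sols k (X i) (X i')"
    and "j1 < k" "j2 < k" "j1 \<noteq> j2"
    and "same_col_class A m j1 j2"
    and "real L \<ge> 4 * real t * Gamma_q CARD('a) ^ CARD('n)"
  shows "\<exists>i\<in>{1..L}. \<exists>p :: nat \<Rightarrow> nat \<times> nat.
           inj_on p {1..t} \<and>
           (\<forall>s\<in>{1..t}. fst (p s) \<in> {1..L} - {i} \<and> snd (p s) \<in> {1..L} - {i} \<and>
              is_solution A m k
                (\<lambda>j. if j = j1 then X (fst (p s)) j1
                      else if j = j2 then X (snd (p s)) j2 else X i j))"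
proof -
  obtain c where "c \<noteq> 0" and col: "\<forall>i<m. A i j2 = c * A i j1"
    using \<open>same_col_class A m j1 j2\<close> unfolding same_col_class_def by blast
  \<comment> \<open>Swapping in new entries at \<open>j1, j2\<close> keeps a solution as long as \<open>a + b\<close> is unchanged.\<close>
  define a where "a i = X i j1" for i
  define b where "b i = c *s X i j2" for i
  have a_inj: "inj_on a {1..L}"
    unfolding a_def by (rule inj_on_entry_of_disjoint_sols[OF disj \<open>j1 < k\<close>])
  have b_inj: "inj_on b {1..L}"
    unfolding b_def
    by (rule inj_on_scaled[OF \<open>c \<noteq> 0\<close> inj_on_entry_of_disjoint_sols[OF disj \<open>j2 < k\<close>]])
  have "4 * real t * Gamma_q CARD('a) ^ CARD('n) \<le> real (card {1..L})" using assms(8) by simp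
  then obtain i where i: "i \<in> {1..L}"
    and "t \<le> card {(y, z)\<in>{1..L} \<times> {1..L}. (y, z) \<noteq> (i, i) \<and> a y + b z = a i + b i}"
      (is "t \<le> card ?N")
    using exists_many_nontrivial_solutions[OF finite_atLeastAtMost a_inj b_inj \<open>t \<ge> 1\<close>] by blast
  moreover have "finite ?N" by (rule finite_subset[of _ "{1..L} \<times> {1..L}"]) auto
  ultimately obtain p where p: "inj_on p {1..t}" "p ` {1..t} \<subseteq> ?N"
    using card_le_inj[of "{1..t}" ?N] by auto
  have swap: "y \<in> {1..L} - {i} \<and> z \<in> {1..L} - {i} \<and>
      is_solution A m k (\<lambda>j. if j = j1 then X y j1 else if j = j2 then X z j2 else X i j)"
    if "(y, z) \<in> ?N" for y z
  proof -
    from that have "y \<in> {1..L}" "z \<in> {1..L}" "(y, z) \<noteq> (i, i)" and "a y + b z = a i + b i"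
      by auto
    moreover from this have "y \<noteq> i" "z \<noteq> i"
      using nontrivial_solution_avoids_base[OF a_inj b_inj i] by blast+
    moreover have "is_solution A m k (X i)" using sols i by blast
    note is_solution_replace_same_class[OF this \<open>j1 < k\<close> \<open>j2 < k\<close> \<open>j1 \<noteq> j2\<close> col]
    ultimately show ?thesis unfolding a_def b_def by blast
  qed
  have "fst (p s) \<in> {1..L} - {i} \<and> snd (p s) \<in> {1..L} - {i} \<and>
      is_solution A m k (\<lambda>j. if j = j1 then X (fst (p s)) j1
        else if j = j2 then X (snd (p s)) j2 else X i j)" if "s \<in> {1..t}" for s
    using swap[of "fst (p s)" "snd (p s)"] subsetD[OF p(2) imageI[OF that]]
    unfolding prod.collapse by blast
  then show ?thesis using i p(1) by (intro bexI[OF _ i] exI[of _ p]) simp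
qed

end
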